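(* Let $k\ge0$, $K=k+12$, $M=K/\gcd(K,27720)$. Let $d=(d_0;d_1,d_2,d_3,d_4)$ be integers with $d_0+d_1+2d_2+d_3+d_4=k+6$, and suppose $\pi d=Jd$ for some transposition $\pi$ of the labels $\{1,3,4\}$ and some $D_4$ simple current $J\in\{\mathrm{id},J_\nu,J_s,J_\nu J_s\}$. Then $F(d)\equiv0\pmod M$ (i.e. $\dim_{F_4}(b')\equiv0\pmod M$ for the corresponding $F_4^{(1)}$-weight $b'$).
   Context: With $a_i=d_i+1$, $F(d)=\frac{1}{2^{15}3^7 5^4 7^2 11}\,a_1a_2a_3a_4(a_1+a_2)(a_1+a_3)(a_1+a_4)(a_2+a_3)(a_2+a_4)(a_3+a_4)(a_1-a_3)(a_1-a_4)(a_4-a_3)(a_1+a_2+a_3)(a_1+a_2+a_4)(a_2+a_3+a_4)(a_1+a_2+a_3+a_4)(a_1+2a_2+a_3)(a_1+2a_2+a_4)(2a_2+a_3+a_4)(a_1+2a_2+a_3+a_4)(2a_1+2a_2+a_3+a_4)(a_1+2a_2+2a_3+a_4)(a_1+2a_2+a_3+2a_4)$ (the formal $F_4$ Weyl dimension, via $\iota'(c)=(c_0;c_2+c_3+c_4+2,c_1,c_2,c_2+c_3+1)$ for $F_4^{(1)}$-weights $c$ of level $k+3$, i.e. $c_0+2c_1+3c_2+2c_3+c_4=k+3$). A permutation $\pi$ of $\{1,3,4\}$ acts on $d$ by permuting the entries $d_1,d_3,d_4$ (fixing $d_0,d_2$). $J_\nu d=(d_1;d_0,d_2,d_4,d_3)$,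 $J_sd=(d_4;d_3,d_2,d_1,d_0)$. *)

theory Defs
  imports Complex_Main "HOL-Combinatorics.Transposition"
begin

type_synonym dvec = "int \<times> int \<times> int \<times> int \<times> int"

definition dcomp :: "dvec \<Rightarrow> nat \<Rightarrow> int" where
  "dcomp d i = (case d of (d0, d1, d2, d3, d4) \<Rightarrow>
     (if i = 0 then d0 else if i = 1 then d1 else if i = 2 then d2
      else if i = 3 then d3 else d4))"

definition perm_act :: "(nat \<Rightarrow> nat) \<Rightarrow> dvec \<Rightarrow> dvec" where
  "perm_act p d = (let q = inv p in
     (dcomp d (q 0), dcomp d (q 1), dcomp d (q 2), dcomp d (q 3), dcomp d (q 4)))"

definition J_nu :: "dvec \<Rightarrow> dvec" where
  "J_nu d = (case d of (d0, d1, d2, d3, d4) \<Rightarrow> (d1, d0, d2, d4, d3))"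

definition J_s :: "dvec \<Rightarrow> dvec" where
  "J_s d = (case d of (d0, d1, d2, d3, d4) \<Rightarrow> (d4, d3, d2, d1, d0))"

text \<open>The formal F4 Weyl dimension, with a_i = d_i + 1.\<close>
definition F :: "dvec \<Rightarrow> rat" where
  "F d = (case d of (d0, d1, d2, d3, d4) \<Rightarrow>
     (let a1 = of_int (d1 + 1) :: rat; a2 = of_int (d2 + 1); a3 = of_int (d3 + 1);
          a4 = of_int (d4 + 1) in
      (a1*a2*a3*a4*(a1+a2)*(a1+a3)*(a1+a4)*(a2+a3)*(a2+a4)*(a3+a4)
       *(a1-a3)*(a1-a4)*(a4-a3)*(a1+a2+a3)*(a1+a2+a4)*(a2+a3+a4)*(a1+a2+a3+a4)
       *(a1+2*a2+a3)*(a1+2*a2+a4)*(2*a2+a3+a4)*(a1+2*a2+a3+a4)*(2*a1+2*a2+a3+a4)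
       *(a1+2*a2+2*a3+a4)*(a1+2*a2+a3+2*a4))
      / (2^15 * 3^7 * 5^4 * 7^2 * 11)))"

end

theory Submission
  imports Defs "HOL-Number_Theory.Cong"
begin

text \<open>
  Write F(d) = P(a) / N with P the product of the 24 linear forms appearing in F and
  N = 2^15 3^7 5^4 7^2 11. The hypothesis \<pi> d = J d forces either two of d1, d3, d4 to
  coincide, so that a factor a_i - a_j of P vanishes, or d0 to equal one of d1, d3, d4; then the
  level condition turns one of the factors 2a1+2a2+a3+a4, a1+2a2+a3+2a4, a1+2a2+2a3+a4 into
  K = k + 12, so P = K R. Integrality of the Weyl dimension formula gives N dvd K R, and the
  cofactor satisfies N / 27720 dvd R; together N dvd gcd K 27720 * R, so F(d) is an integer
  multiple of K / gcd K 27720.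
  Both divisibilities are checked prime by prime by finite computation: for p = 2, 3 by
  repeatedly splitting x = (x mod p) + p (x div p), for p = 5, 7, 11 by counting, at every point
  of the projective space over F_p, the forms vanishing there.
\<close>

type_synonym linform = "int list \<times> int"

definition lf_eval :: "linform \<Rightarrow> int list \<Rightarrow> int" where
  "lf_eval f x = sum_list (map2 (*) (fst f) x) + snd f"

lemma lf_eval_Nil [simp]: "lf_eval ([], k) x = k" "lf_eval (us, k) [] = k"
  by (simp_all add: lf_eval_def)

lemma lf_eval_Cons [simp]: "lf_eval (u # us, k) (v # x) = u * v + lf_eval (us, k) x"
  by (simp add: lf_eval_def)

lemma lf_eval_mod_div:
  "lf_eval f x = lf_eval f (map (\<lambda>v. v mod p) x) + p * lf_eval (fst f, 0) (map (\<lambda>v. v div p) x)"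
proof (induction x arbitrary: f)
  case (Cons v x)
  obtain us k where f: "f = (us, k)" by fastforce
  show ?case
  proof (cases us)
    case (Cons u us')
    have "u * v = u * (v mod p) + p * (u * (v div p))"
      by (metis add.commute distrib_left mult.left_commute mult_div_mod_eq)
    then show ?thesis using Cons.IH[of "(us', k)"] f Cons by (simp add: algebra_simps)
  qed (simp add: f)
qed simp

lemma lf_eval_cong_mod: "[lf_eval f (map (\<lambda>v. v mod p) x) = lf_eval f x] (mod p)"
  by (subst (2) lf_eval_mod_div[of _ _ p]) (simp add: cong_def)

lemma lf_eval_scale: "lf_eval (us, 0) (map ((*) l) x) = l * lf_eval (us, 0) x"
proof (induction x arbitrary: us)
  case (Cons v x)
  then show ?case by (cases us) (simp_all add: algebra_simps)
qed simp

fun residue_vectors :: "int \<Rightarrow> nat \<Rightarrow> int list list" where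
  "residue_vectors p 0 = [[]]"
| "residue_vectors p (Suc n) = concat (map (\<lambda>c. map ((#) c) (residue_vectors p n)) [0..p-1])"

lemma map_mod_in_residue_vectors:
  assumes "0 < p"
  shows "map (\<lambda>v. v mod p) x \<in> set (residue_vectors p (length x))"
  by (induction x) (use assms in auto)

definition lf_lift :: "int \<Rightarrow> int list \<Rightarrow> linform \<Rightarrow> linform option" where
  "lf_lift p c f = (if p dvd lf_eval f c then Some (fst f, lf_eval f c div p) else None)"

lemma lf_lift_SomeD:
  assumes "lf_lift p (map (\<lambda>v. v mod p) x) f = Some g"
  shows "lf_eval f x = p * lf_eval g (map (\<lambda>v. v div p) x)"
proof -
  let ?c = "map (\<lambda>v. v mod p) x"
  have "p dvd lf_eval f ?c" and g: "g = (fst f, lf_eval f ?c div p)"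
    using assms by (simp_all add: lf_lift_def split: if_splits)
  then have "lf_eval f ?c = p * snd g" by simp
  moreover have "lf_eval g y = lf_eval (fst f, 0) y + snd g" for y
    by (simp add: g lf_eval_def)
  ultimately show ?thesis
    by (subst lf_eval_mod_div[of _ _ p]) (simp add: algebra_simps)
qed

lemma prod_lf_eval_lift_dvd:
  fixes p :: int and x :: "int list" and fs :: "linform list"
  defines "gs \<equiv> List.map_filter (lf_lift p (map (\<lambda>v. v mod p) x)) fs"
  shows "p ^ length gs * (\<Prod>g\<leftarrow>gs. lf_eval g (map (\<lambda>v. v div p) x)) dvd (\<Prod>f\<leftarrow>fs. lf_eval f x)"
  unfolding gs_def
proof (induction fs)
  case (Cons f fs)
  show ?case
  proof (cases "lf_lift p (map (\<lambda>v. v mod p) x) f")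
    case None
    then show ?thesis using Cons.IH by (simp add: dvd_mult)
  next
    case (Some g)
    let ?y = "map (\<lambda>v. v div p) x"
    let ?gs = "List.map_filter (lf_lift p (map (\<lambda>v. v mod p) x)) fs"
    have "p * lf_eval g ?y * (p ^ length ?gs * (\<Prod>g\<leftarrow>?gs. lf_eval g ?y))
        dvd lf_eval f x * (\<Prod>f\<leftarrow>fs. lf_eval f x)"
      using Cons.IH by (intro mult_dvd_mono) (simp_all add: lf_lift_SomeD[OF Some])
    moreover have "List.map_filter (lf_lift p (map (\<lambda>v. v mod p) x)) (f # fs) = g # ?gs"
      using Some by (simp add: List.map_filter_def)
    ultimately show ?thesis
      by (simp only: list.map prod_list.Cons length_Cons power_Suc mult_ac)
  qed
qed simp

text \<open>
  \<open>lift_check d p n fs e\<close> certifies that p^e divides the product of the forms at every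
  x \<in> \<int>^n: for each residue c of x mod p, the forms divisible by p at c contribute one factor
  p each and are replaced by the forms y \<mapsto> f(c + p y) / p, which are checked recursively
  (at most d more times).
\<close>

fun lift_check :: "nat \<Rightarrow> int \<Rightarrow> nat \<Rightarrow> linform list \<Rightarrow> nat \<Rightarrow> bool" where
  "lift_check 0 p n fs e \<longleftrightarrow> e = 0"
| "lift_check (Suc d) p n fs e \<longleftrightarrow> e = 0 \<or>
     (\<forall>c\<in>set (residue_vectors p n).
        let gs = List.map_filter (lf_lift p c) fs in lift_check d p n gs (e - length gs))"

lemma lift_check_sound:
  assumes "lift_check d p n fs e" "length x = n" "0 < p"
  shows "p ^ e dvd (\<Prod>f\<leftarrow>fs. lf_eval f x)"
  using assms(1,2)
proof (induction d arbitrary: fs e x)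
  case (Suc d)
  define gs where "gs = List.map_filter (lf_lift p (map (\<lambda>v. v mod p) x)) fs"
  show ?case
  proof (cases "e = 0")
    case False
    then have "lift_check d p n gs (e - length gs)"
      using Suc.prems map_mod_in_residue_vectors[OF assms(3), of x] by (auto simp: gs_def Let_def)
    then have IH: "p ^ (e - length gs) dvd (\<Prod>g\<leftarrow>gs. lf_eval g (map (\<lambda>v. v div p) x))"
      using Suc.IH[where fs = gs and e = "e - length gs" and x = "map (\<lambda>v. v div p) x"] Suc.prems(2)
      by simp
    have "p ^ e dvd p ^ length gs * p ^ (e - length gs)"
      by (simp add: le_imp_power_dvd flip: power_add)
    also have "\<dots> dvd p ^ length gs * (\<Prod>g\<leftarrow>gs. lf_eval g (map (\<lambda>v. v div p) x))"
      using IH by (rule mult_dvd_mono[OF dvd_refl])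
    also have "\<dots> dvd (\<Prod>f\<leftarrow>fs. lf_eval f x)"
      unfolding gs_def by (rule prod_lf_eval_lift_dvd)
    finally show ?thesis .
  qed simp
qed simp

definition vanishing_count :: "int \<Rightarrow> int list \<Rightarrow> linform list \<Rightarrow> nat" where
  "vanishing_count p x fs = length (filter (\<lambda>f. p dvd lf_eval f x) fs)"

lemma power_vanishing_count_dvd: "p ^ vanishing_count p x fs dvd (\<Prod>f\<leftarrow>fs. lf_eval f x)"
  by (induction fs) (auto simp: vanishing_count_def mult_dvd_mono dvd_mult)

lemma vanishing_count_remove1: "vanishing_count p x fs - 1 \<le> vanishing_count p x (remove1 g fs)"
  by (simp add: vanishing_count_def filter_remove1 length_remove1)

text \<open>
  One representative of each point of the projective space over F_p of dimension n - 1: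
  the vectors in {0..p-1}^n whose first nonzero entry is 1.
\<close>

fun projective_reps :: "int \<Rightarrow> nat \<Rightarrow> int list list" where
  "projective_reps p 0 = []"
| "projective_reps p (Suc n) = map ((#) 1) (residue_vectors p n) @ map ((#) 0) (projective_reps p n)"

lemma unit_multiple_in_projective_reps:
  assumes "prime p" "\<exists>v\<in>set x. \<not> p dvd v"
  shows "\<exists>l. \<not> p dvd l \<and> map (\<lambda>v. l * v mod p) x \<in> set (projective_reps p (length x))"
  using assms(2)
proof (induction x)
  case (Cons a x)
  have "1 < p" using assms(1) by (rule prime_gt_1_int)
  show ?case
  proof (cases "p dvd a")
    case True
    then have "\<exists>v\<in>set x. \<not> p dvd v"
      using Cons.prems by auto
    then obtain l
      where "\<not> p dvd l" "map (\<lambda>v. l * v mod p) x \<in> set (projective_reps p (length x))"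
      using Cons.IH by blast
    moreover have "l * a mod p = 0"
      using True by simp
    ultimately have "\<not> p dvd l \<and> map (\<lambda>v. l * v mod p) (a # x) \<in> set (projective_reps p (length (a # x)))"
      by (simp only: list.map length_Cons projective_reps.simps set_append set_map Un_iff image_iff) blast
    then show ?thesis ..
  next
    case False
    then have "coprime a p"
      using assms(1) prime_imp_coprime coprime_commute by blast
    then obtain l where "[a * l = 1] (mod p)"
      using cong_solve_coprime_int by blast
    then have la: "l * a mod p = 1"
      using \<open>1 < p\<close> by (simp add: cong_def mult.commute)
    then have "\<not> p dvd l"
      by (metis dvd_mult2 dvd_imp_mod_0 zero_neq_one)
    moreover have "map (\<lambda>v. l * v mod p) x \<in> set (residue_vectors p (length x))"
      using map_mod_in_residue_vectors[of p "map ((*) l) x"] \<open>1 < p\<close> by (simp add: comp_def)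
    ultimately show ?thesis
      using la by (intro exI[of _ l]) simp
  qed
qed simp

fun vanishing_at_least :: "int \<Rightarrow> int list \<Rightarrow> nat \<Rightarrow> linform list \<Rightarrow> bool" where
  "vanishing_at_least p c 0 fs \<longleftrightarrow> True"
| "vanishing_at_least p c (Suc m) [] \<longleftrightarrow> False"
| "vanishing_at_least p c (Suc m) (f # fs) \<longleftrightarrow>
     (if p dvd lf_eval f c then vanishing_at_least p c m fs else vanishing_at_least p c (Suc m) fs)"

lemma vanishing_at_least_iff: "vanishing_at_least p c m fs \<longleftrightarrow> m \<le> vanishing_count p c fs"
  by (induction p c m fs rule: vanishing_at_least.induct) (simp_all add: vanishing_count_def)

definition count_check :: "int \<Rightarrow> nat \<Rightarrow> linform list \<Rightarrow> nat \<Rightarrow> bool" where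
  "count_check p n fs m \<longleftrightarrow>
     m \<le> length fs \<and> list_all (\<lambda>c. vanishing_at_least p c m fs) (projective_reps p n)"

lemma count_check_sound:
  assumes "count_check p n fs m" "length x = n" "prime p" "\<forall>f\<in>set fs. snd f = 0"
  shows "m \<le> vanishing_count p x fs"
proof (cases "\<forall>v\<in>set x. p dvd v")
  case True
  have "map ((*) p) (map (\<lambda>v. v div p) x) = x"
    using True by (simp add: map_idI)
  from lf_eval_scale[of _ p "map (\<lambda>v. v div p) x", unfolded this]
  have "p dvd lf_eval (us, 0) x" for us
    by simp
  then have "p dvd lf_eval f x" if "f \<in> set fs" for f
    using assms(4) that by (cases f) auto
  then have "vanishing_count p x fs = length fs"
    by (simp add: vanishing_count_def filter_True)
  then show ?thesis using assms(1) by (simp add: count_check_def)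
next
  case False
  then obtain l where l: "\<not> p dvd l"
    and c: "map (\<lambda>v. l * v mod p) x \<in> set (projective_reps p (length x))"
    using unit_multiple_in_projective_reps[OF assms(3)] by blast
  have "p dvd lf_eval f (map (\<lambda>v. l * v mod p) x) \<longleftrightarrow> p dvd lf_eval f x"
    if mem: "f \<in> set fs" for f
  proof -
    obtain us where f: "f = (us, 0)"
      using assms(4) mem by (cases f) auto
    have "[lf_eval f (map (\<lambda>v. l * v mod p) x) = l * lf_eval f x] (mod p)"
      using lf_eval_cong_mod[of f p "map ((*) l) x"] by (simp add: f lf_eval_scale comp_def)
    then show ?thesis
      using l assms(3) by (simp add: cong_dvd_iff prime_dvd_mult_iff)
  qed
  then have "vanishing_count p (map (\<lambda>v. l * v mod p) x) fs = vanishing_count p x fs"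
    unfolding vanishing_count_def by (metis (mono_tags, lifting) filter_cong)
  then show ?thesis using assms(1,2) c by (auto simp: count_check_def list_all_iff vanishing_at_least_iff)
qed

lemma count_check_prod_dvd:
  assumes "count_check p n fs m" "length x = n" "prime p" "\<forall>f\<in>set fs. snd f = 0"
  shows "p ^ m dvd (\<Prod>f\<leftarrow>fs. lf_eval f x)"
  using count_check_sound[OF assms] power_vanishing_count_dvd le_imp_power_dvd dvd_trans by blast

lemma count_check_remove1_prod_dvd:
  assumes "count_check p n fs m" "length x = n" "prime p" "\<forall>f\<in>set fs. snd f = 0"
  shows "p ^ (m - 1) dvd (\<Prod>f\<leftarrow>remove1 g fs. lf_eval f x)"
proof -
  have "m - 1 \<le> vanishing_count p x (remove1 g fs)"
    using count_check_sound[OF assms] vanishing_count_remove1[of p x fs g] by linarith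
  then show ?thesis
    using power_vanishing_count_dvd le_imp_power_dvd dvd_trans by blast
qed

lemma prod_list_map_remove1:
  "x \<in> set xs \<Longrightarrow> prod_list (map f xs) = f x * prod_list (map f (remove1 x xs))"
  for f :: "'a \<Rightarrow> 'b::comm_monoid_mult"
  by (induction xs) (auto simp: mult.left_commute)

lemma dvd_div_gcd_factor:
  fixes K R m n :: int
  assumes "m * n dvd K * R" "n dvd R"
  shows "\<exists>z. K * R = K div gcd K m * z * (m * n)"
proof (cases "n = 0")
  case True
  then show ?thesis using assms(2) by simp
next
  case False
  obtain R' where R: "R = n * R'" using assms(2) ..
  have "m dvd K * R'"
    using assms(1) False by (simp add: R mult.left_commute[of K] mult.commute[of m])
  then have "m dvd gcd (R' * K) (R' * m)"
    by (simp add: mult.commute)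
  then have "m dvd \<bar>R' * gcd K m\<bar>"
    by (simp flip: gcd_mult_distrib_int add: abs_mult)
  then have "m dvd R' * gcd K m"
    by simp
  then obtain z where z: "R' * gcd K m = m * z" ..
  have "K * R = K div gcd K m * (R' * gcd K m) * n"
    by (simp add: R)
  then show ?thesis
    by (intro exI[of _ z]) (simp add: z)
qed

definition f4_forms :: "linform list" where
  "f4_forms = map (\<lambda>u. (u, 0))
    [[1,0,0,0], [0,1,0,0], [0,0,1,0], [0,0,0,1], [1,1,0,0], [1,0,1,0], [1,0,0,1], [0,1,1,0],
     [0,1,0,1], [0,0,1,1], [1,0,-1,0], [1,0,0,-1], [0,0,-1,1], [1,1,1,0], [1,1,0,1], [0,1,1,1],
     [1,1,1,1], [1,2,1,0], [1,2,0,1], [0,2,1,1], [1,2,1,1], [2,2,1,1], [1,2,2,1], [1,2,1,2]]"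

definition f4_level_forms :: "linform list" where
  "f4_level_forms = [([2,2,1,1], 0), ([1,2,1,2], 0), ([1,2,2,1], 0)]"

lemma F_eq_prod_f4_forms:
  "F (d0, d1, d2, d3, d4) =
     of_int (\<Prod>f\<leftarrow>f4_forms. lf_eval f [d1 + 1, d2 + 1, d3 + 1, d4 + 1]) / (2^15 * 3^7 * 5^4 * 7^2 * 11)"
  by (simp add: F_def Let_def f4_forms_def lf_eval_def mult.assoc)

lemma F_eq_0:
  assumes "d1 = d3 \<or> d1 = d4 \<or> d3 = d4"
  shows "F (d0, d1, d2, d3, d4) = 0"
  using assms by (elim disjE) (simp_all add: F_def)

lemma f4_forms_homogeneous: "\<forall>f\<in>set f4_forms. snd f = 0"
  by (simp add: f4_forms_def)

lemma f4_level_forms_subset: "set f4_level_forms \<subseteq> set f4_forms"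
  by (simp add: f4_level_forms_def f4_forms_def)

lemma f4_lift_check_2: "lift_check 4 2 4 f4_forms 15"
  by code_simp

lemma f4_lift_check_3: "lift_check 4 3 4 f4_forms 7"
  by code_simp

lemma f4_lift_check_2_remove1: "list_all (\<lambda>g. lift_check 4 2 4 (remove1 g f4_forms) 12) f4_level_forms"
  by code_simp

lemma f4_lift_check_3_remove1: "list_all (\<lambda>g. lift_check 4 3 4 (remove1 g f4_forms) 5) f4_level_forms"
  by code_simp

lemma f4_count_check_5: "count_check 5 4 f4_forms 4"
  by code_simp

lemma f4_count_check_7: "count_check 7 4 f4_forms 2"
  by code_simp

lemma f4_count_check_11: "count_check 11 4 f4_forms 1"
  by code_simp

lemma f4_forms_prod_dvd:
  assumes "length x = 4"
  shows "(2^15 * 3^7 * 5^4 * 7^2 * 11 :: int) dvd (\<Prod>f\<leftarrow>f4_forms. lf_eval f x)"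
proof -
  have p2: "(2::int)^15 dvd (\<Prod>f\<leftarrow>f4_forms. lf_eval f x)"
    using lift_check_sound[OF f4_lift_check_2 assms] by simp
  have p3: "(3::int)^7 dvd (\<Prod>f\<leftarrow>f4_forms. lf_eval f x)"
    using lift_check_sound[OF f4_lift_check_3 assms] by simp
  have p5: "(5::int)^4 dvd (\<Prod>f\<leftarrow>f4_forms. lf_eval f x)"
    using count_check_prod_dvd[OF f4_count_check_5 assms _ f4_forms_homogeneous] by simp
  have p7: "(7::int)^2 dvd (\<Prod>f\<leftarrow>f4_forms. lf_eval f x)"
    using count_check_prod_dvd[OF f4_count_check_7 assms _ f4_forms_homogeneous] by simp
  have p11: "(11::int) dvd (\<Prod>f\<leftarrow>f4_forms. lf_eval f x)"
    using count_check_prod_dvd[OF f4_count_check_11 assms _ f4_forms_homogeneous] by simp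
  show ?thesis
    by (intro divides_mult p2 p3 p5 p7 p11) code_simp+
qed

lemma f4_forms_remove1_prod_dvd:
  assumes "length x = 4" "g \<in> set f4_level_forms"
  shows "(2^12 * 3^5 * 5^3 * 7 :: int) dvd (\<Prod>f\<leftarrow>remove1 g f4_forms. lf_eval f x)"
proof -
  have "lift_check 4 2 4 (remove1 g f4_forms) 12" "lift_check 4 3 4 (remove1 g f4_forms) 5"
    using f4_lift_check_2_remove1 f4_lift_check_3_remove1 assms(2) by (simp_all add: list_all_iff)
  then have p2: "(2::int)^12 dvd (\<Prod>f\<leftarrow>remove1 g f4_forms. lf_eval f x)"
    and p3: "(3::int)^5 dvd (\<Prod>f\<leftarrow>remove1 g f4_forms. lf_eval f x)"
    using lift_check_sound assms(1) by fastforce+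
  have p5: "(5::int)^3 dvd (\<Prod>f\<leftarrow>remove1 g f4_forms. lf_eval f x)"
    using count_check_remove1_prod_dvd[OF f4_count_check_5 assms(1) _ f4_forms_homogeneous] by simp
  have p7: "(7::int) dvd (\<Prod>f\<leftarrow>remove1 g f4_forms. lf_eval f x)"
    using count_check_remove1_prod_dvd[OF f4_count_check_7 assms(1) _ f4_forms_homogeneous] by simp
  show ?thesis
    by (intro divides_mult p2 p3 p5 p7) code_simp+
qed

lemma f4_forms_prod_eq_level_multiple:
  assumes "length x = 4" "g \<in> set f4_level_forms"
  defines "K \<equiv> lf_eval g x"
  shows "\<exists>z. (\<Prod>f\<leftarrow>f4_forms. lf_eval f x) = K div gcd K 27720 * z * (2^15 * 3^7 * 5^4 * 7^2 * 11)"
proof -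
  have "(\<Prod>f\<leftarrow>f4_forms. lf_eval f x) = K * (\<Prod>f\<leftarrow>remove1 g f4_forms. lf_eval f x)"
    unfolding K_def using assms(2) f4_level_forms_subset by (intro prod_list_map_remove1) auto
  moreover have "(2^15 * 3^7 * 5^4 * 7^2 * 11 :: int) = 27720 * (2^12 * 3^5 * 5^3 * 7)"
    by simp
  ultimately show ?thesis
    using dvd_div_gcd_factor f4_forms_prod_dvd[OF assms(1)] f4_forms_remove1_prod_dvd[OF assms(1,2)]
    by metis
qed

lemma perm_act_transpose:
  "perm_act (transpose 1 3) (d0, d1, d2, d3, d4) = (d0, d3, d2, d1, d4)"
  "perm_act (transpose 1 4) (d0, d1, d2, d3, d4) = (d0, d4, d2, d3, d1)"
  "perm_act (transpose 3 4) (d0, d1, d2, d3, d4) = (d0, d1, d2, d4, d3)"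
  by (simp_all add: perm_act_def dcomp_def transpose_def)

lemma fixed_point_cases:
  assumes "a \<in> {1,3,4}" "b \<in> {1,3,4}" "a \<noteq> b" "J \<in> {id, J_nu, J_s, J_nu \<circ> J_s}"
    and "perm_act (transpose a b) (d0, d1, d2, d3, d4) = J (d0, d1, d2, d3, d4)"
  shows "d1 = d3 \<or> d1 = d4 \<or> d3 = d4 \<or> d0 = d1 \<or> d0 = d3 \<or> d0 = d4"
proof -
  have "transpose a b = transpose 1 3 \<or> transpose a b = transpose 1 4 \<or> transpose a b = transpose 3 4"
    using assms(1-3) by (auto simp: transpose_commute)
  then have "perm_act (transpose a b) (d0, d1, d2, d3, d4) \<in>
      {(d0, d3, d2, d1, d4), (d0, d4, d2, d3, d1), (d0, d1, d2, d4, d3)}"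
    by (elim disjE) (simp_all only: perm_act_transpose insert_iff simp_thms)
  then have J_mem: "J (d0, d1, d2, d3, d4) \<in>
      {(d0, d3, d2, d1, d4), (d0, d4, d2, d3, d1), (d0, d1, d2, d4, d3)}"
    unfolding assms(5) .
  have "J = id \<or> J = J_nu \<or> J = J_s \<or> J = J_nu \<circ> J_s"
    using assms(4) by simp
  then show ?thesis
    by (elim disjE) (use J_mem in \<open>simp add: J_nu_def J_s_def; blast\<close>)+
qed

lemma level_form_value:
  assumes "d0 + d1 + 2 * d2 + d3 + d4 + 6 = K" "d0 = d1 \<or> d0 = d3 \<or> d0 = d4"
  shows "\<exists>g\<in>set f4_level_forms. lf_eval g [d1 + 1, d2 + 1, d3 + 1, d4 + 1] = K"
  using assms by (auto simp: f4_level_forms_def lf_eval_def)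

lemma F_level_multiple:
  assumes "d0 + d1 + 2 * d2 + d3 + d4 + 6 = K" "d0 = d1 \<or> d0 = d3 \<or> d0 = d4"
  shows "\<exists>z. F (d0, d1, d2, d3, d4) = of_int (K div gcd K 27720 * z)"
proof -
  let ?x = "[d1 + 1, d2 + 1, d3 + 1, d4 + 1]"
  obtain g where g: "g \<in> set f4_level_forms" "lf_eval g ?x = K"
    using level_form_value[OF assms] by blast
  define c where "c = K div gcd K 27720"
  have "length ?x = 4"
    by simp
  from f4_forms_prod_eq_level_multiple[OF this g(1), unfolded g(2), folded c_def]
  obtain z where z: "(\<Prod>f\<leftarrow>f4_forms. lf_eval f ?x) = c * z * (2^15 * 3^7 * 5^4 * 7^2 * 11)"
    by blast
  have "F (d0, d1, d2, d3, d4) = of_int (c * z)"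
    unfolding F_eq_prod_f4_forms z by simp
  then show ?thesis
    unfolding c_def by blast
qed

theorem theorem6:
  fixes k :: nat and d0 d1 d2 d3 d4 :: int and a b :: nat and J :: "dvec \<Rightarrow> dvec"
  assumes "d0 + d1 + 2*d2 + d3 + d4 = int k + 6"
    and "a \<in> {1,3,4}" and "b \<in> {1,3,4}" and "a \<noteq> b"
    and "J \<in> {id, J_nu, J_s, J_nu \<circ> J_s}"
    and "perm_act (transpose a b) (d0, d1, d2, d3, d4) = J (d0, d1, d2, d3, d4)"
  shows "\<exists>z::int. F (d0, d1, d2, d3, d4)
           = of_int ((int (k + 12) div gcd (int (k + 12)) 27720) * z)"
proof -
  consider "d1 = d3 \<or> d1 = d4 \<or> d3 = d4" | "d0 = d1 \<or> d0 = d3 \<or> d0 = d4"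
    using fixed_point_cases[OF assms(2-6)] by blast
  then show ?thesis
  proof cases
    case 1
    then have "F (d0, d1, d2, d3, d4) = 0"
      by (rule F_eq_0)
    then show ?thesis
      by (intro exI[of _ 0]) simp
  next
    case 2
    have "d0 + d1 + 2 * d2 + d3 + d4 + 6 = int (k + 12)"
      using assms(1) by simp
    from F_level_multiple[OF this 2] show ?thesis .
  qed
qed

end
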